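(* Let $G$ be a closed and continuous metric cyclic graph whose vertex set $V$ is homeomorphic to $S^1$, and let $u\in V$. Then the map $[0,\gamma_V(u)]\to V$, $r\mapsto g_r(u)$, is continuous.
   Context: Identify $S^1$ with $[0,1)$; $d_{S^1}(x,y)\in[0,1)$ is the normalized counterclockwise distance from $x$ to $y$, and $[x,y]_V$ denotes the set of points of $V$ on the closed counterclockwise arc from $x$ to $y$. A directed graph $G=(V,E)$ (no loops, no opposite edges) with $V\subseteq S^1$ is cyclic if whenever $u_0\to u_1$, every $w\in V$ strictly counterclockwise-between $u_0$ and $u_1$ has $u_0\to w$ and $w\to u_1$. Define $\gamma_m(u_0)=\sup\{\sum_{i=0}^{m-1}d_{S^1}(u_i,u_{i+1}):u_0\to\cdots\to u_m\text{ in }G\}$ and $f_1(u)=u+\gamma_1(u)\bmod1$. $G$ is closed if $V$ is closed in $S^1$ (then $f_1(u)\in V$), and continuous if every $\gamma_m$ is continuous. $G$ is metric if $V$ carries a metric $d_V$ inducing the subspace topology from $S^1$ such that $d_V(u_0,u_1)<d_V(u_0,u_2)$ for every directed path $u_0\to u_1\to u_2$. Set $\gamma_V(u)=d_V(u,f_1(u))$. For $r\in[0,\gamma_V(u)]$, $g_r(u)$ is the unique point $w\in[u,f_1(u)]_V$ with $d_V(u,w)=r$. *)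

theory Defs
  imports "HOL-Analysis.Analysis"
begin

text \<open>S^1 is identified with [0,1); the point x corresponds to exp(2 pi i x).\<close>

definition circ_emb :: "real \<Rightarrow> complex" where
  "circ_emb x = cis (2 * pi * x)"

definition dS1 :: "real \<Rightarrow> real \<Rightarrow> real" where
  "dS1 x y = frac (y - x)"

definition arc :: "real set \<Rightarrow> real \<Rightarrow> real \<Rightarrow> real set" where
  "arc V x y = {w \<in> V. dS1 x w \<le> dS1 x y}"

definition S1top :: "real set \<Rightarrow> real topology" where
  "S1top V = pullback_topology V circ_emb (top_of_set (sphere 0 1))"

definition circ_digraph :: "real set \<Rightarrow> (real \<times> real) set \<Rightarrow> bool" where
  "circ_digraph V E \<longleftrightarrow> V \<subseteq> {0..<1} \<and> E \<subseteq> V \<times> V \<and>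
     (\<forall>x. (x, x) \<notin> E) \<and> (\<forall>x y. (x, y) \<in> E \<longrightarrow> (y, x) \<notin> E)"

definition cyclic_graph :: "real set \<Rightarrow> (real \<times> real) set \<Rightarrow> bool" where
  "cyclic_graph V E \<longleftrightarrow> circ_digraph V E \<and>
     (\<forall>u0 u1 w. (u0, u1) \<in> E \<longrightarrow> w \<in> V \<longrightarrow> 0 < dS1 u0 w \<longrightarrow> dS1 u0 w < dS1 u0 u1 \<longrightarrow>
        (u0, w) \<in> E \<and> (w, u1) \<in> E)"

text \<open>gamma_m(u0): supremum of total length of directed paths u0 -> ... -> um.
  (The value 0 is included so that a vertex without such paths gets gamma = 0; since all
  lengths are nonnegative this does not change the supremum otherwise.)\<close>
definition gamma :: "(real \<times> real) set \<Rightarrow> nat \<Rightarrow> real \<Rightarrow> real" where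
  "gamma E m u0 = Sup (insert 0 {(\<Sum>i<m. dS1 (us i) (us (Suc i))) | us.
      us 0 = u0 \<and> (\<forall>i<m. (us i, us (Suc i)) \<in> E)})"

definition f1 :: "(real \<times> real) set \<Rightarrow> real \<Rightarrow> real" where
  "f1 E u = frac (u + gamma E 1 u)"

definition closed_graph :: "real set \<Rightarrow> bool" where
  "closed_graph V \<longleftrightarrow> closed (circ_emb ` V)"

definition continuous_graph :: "real set \<Rightarrow> (real \<times> real) set \<Rightarrow> bool" where
  "continuous_graph V E \<longleftrightarrow> (\<forall>m. continuous_map (S1top V) euclideanreal (gamma E m))"

definition metric_for :: "real set \<Rightarrow> (real \<times> real) set \<Rightarrow> (real \<Rightarrow> real \<Rightarrow> real) \<Rightarrow> bool" where
  "metric_for V E dV \<longleftrightarrow> Metric_space V dV \<and> Metric_space.mtopology V dV = S1top V \<and>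
     (\<forall>u0 u1 u2. (u0, u1) \<in> E \<longrightarrow> (u1, u2) \<in> E \<longrightarrow> dV u0 u1 < dV u0 u2)"

definition gammaV :: "(real \<times> real) set \<Rightarrow> (real \<Rightarrow> real \<Rightarrow> real) \<Rightarrow> real \<Rightarrow> real" where
  "gammaV E dV u = dV u (f1 E u)"

definition g :: "real set \<Rightarrow> (real \<times> real) set \<Rightarrow> (real \<Rightarrow> real \<Rightarrow> real) \<Rightarrow> real \<Rightarrow> real \<Rightarrow> real" where
  "g V E dV r u = (THE w. w \<in> arc V u (f1 E u) \<and> dV u w = r)"

end

theory Submission
  imports Defs
begin

(* A vertex set V \<subseteq> [0,1) whose S^1-topology is a circle is all of [0,1): otherwise
   the circle would embed continuously and injectively into a punctured circle, i.e. into
   the real line, which invariance of domain forbids.  So the arc from u to f1 u is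
   parametrised by t \<mapsto> u + t (mod 1) for t \<in> [0,c], where c = dS1 u (f1 u) \<le> gamma_1 u.
   For 0 \<le> s < t < c some edge u \<rightarrow> w overshoots t, and cyclicity yields the path
   u \<rightarrow> u+s \<rightarrow> u+t, so the metric axiom makes h t = dV u (u + t) strictly increasing on
   [0,c), hence by continuity on [0,c].  Thus h is a homeomorphism of [0,c] onto
   [0, gammaV u], and r \<mapsto> g_r(u) is u + h^-1(r). *)

lemma circ_emb_frac: "circ_emb (frac x) = circ_emb x"
proof -
  have "cis (2 * pi * x) = cis (2 * pi * frac x) * cis (2 * pi * of_int \<lfloor>x\<rfloor>)"
    by (simp add: cis_mult frac_def algebra_simps)
  then show ?thesis by (simp add: cis_multiple_2pi circ_emb_def)
qed

lemma inj_on_circ_emb: "inj_on circ_emb {0..<1}"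
  unfolding circ_emb_def
proof (rule inj_onI)
  fix x y :: real
  assume "x \<in> {0..<1}" "y \<in> {0..<1}" and "cis (2 * pi * x) = cis (2 * pi * y)"
  then obtain n :: int
    where "\<i> * complex_of_real (2 * pi * x) = \<i> * complex_of_real (2 * pi * y) + of_int (2 * n) * pi * \<i>"
    by (auto simp: cis_conv_exp exp_eq)
  then have "2 * pi * (x - y) = 2 * pi * of_int n"
    by (auto simp: complex_eq_iff algebra_simps)
  then have "x - y \<in> \<int>" by simp
  moreover have "\<bar>x - y\<bar> < 1" using \<open>x \<in> {0..<1}\<close> \<open>y \<in> {0..<1}\<close> by auto
  ultimately show "x = y" using Ints_nonzero_abs_less1 by fastforce
qed

lemma topspace_S1top [simp]: "topspace (S1top V) = V"
  by (auto simp: S1top_def topspace_pullback_topology circ_emb_def)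

lemma continuous_map_circ_emb: "continuous_map (S1top V) (top_of_set (sphere 0 1)) circ_emb"
  unfolding S1top_def by (rule continuous_map_pullback [OF continuous_map_id, simplified])

lemma circle_self_embedding_surj:
  fixes F :: "complex \<Rightarrow> complex"
  assumes contF: "continuous_on (sphere 0 1) F" and injF: "inj_on F (sphere 0 1)"
    and Fim: "F ` sphere 0 1 \<subseteq> sphere 0 1"
  shows "F ` sphere 0 1 = sphere 0 1"
proof (rule ccontr)
  assume "F ` sphere 0 1 \<noteq> sphere 0 1"
  then obtain b where b: "b \<in> sphere 0 1" "b \<notin> F ` sphere 0 1" using Fim by blast
  have "sphere 0 1 - {b} homeomorphic (UNIV :: real set)"
    using homeomorphic_punctured_affine_sphere_affine [of 1 b 0 UNIV "UNIV :: real set"] b by simp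
  then obtain h :: "complex \<Rightarrow> real" and k where hk: "homeomorphism (sphere 0 1 - {b}) UNIV h k"
    unfolding homeomorphic_def by blast
  have Fim': "F ` sphere 0 1 \<subseteq> sphere 0 1 - {b}" using Fim b by blast
  have "continuous_on (sphere 0 1) (h \<circ> F)"
    using contF hk Fim' by (meson continuous_on_compose continuous_on_subset homeomorphism_cont1)
  moreover have "inj_on (h \<circ> F) (sphere 0 1)"
  proof (rule comp_inj_on [OF injF inj_on_subset [OF _ Fim']])
    show "inj_on h (sphere 0 1 - {b})"
      using hk by (metis homeomorphism_apply1 inj_on_inverseI)
  qed
  ultimately have "DIM(complex) \<le> DIM(real)"
    by (rule no_embedding_sphere_lowdim) simp
  then show False by simp
qed

lemma S1top_homeomorphic_circle_imp_eq:
  assumes sub: "V \<subseteq> {0..<1}"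
    and hom: "S1top V homeomorphic_space top_of_set (sphere (0::complex) 1)"
  shows "V = {0..<1}"
proof -
  obtain \<phi> \<psi> where hm: "homeomorphic_maps (S1top V) (top_of_set (sphere (0::complex) 1)) \<phi> \<psi>"
    using hom unfolding homeomorphic_space_def by blast
  then have \<psi>: "continuous_map (top_of_set (sphere 0 1)) (S1top V) \<psi>"
    by (simp add: homeomorphic_maps_def)
  have inj\<psi>: "inj_on \<psi> (sphere 0 1)"
    by (rule inj_on_inverseI [where g = \<phi>]) (use hm in \<open>simp add: homeomorphic_maps_def\<close>)
  have \<psi>V: "\<psi> ` sphere 0 1 \<subseteq> V"
    using continuous_map_image_subset_topspace [OF \<psi>] by simp
  have "continuous_map (top_of_set (sphere 0 1)) (top_of_set (sphere 0 1)) (circ_emb \<circ> \<psi>)"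
    using \<psi> continuous_map_circ_emb by (rule continuous_map_compose)
  then have cont: "continuous_on (sphere 0 1) (circ_emb \<circ> \<psi>)"
    and im: "(circ_emb \<circ> \<psi>) ` sphere 0 1 \<subseteq> sphere 0 1"
    by (auto simp: continuous_map_subtopology_eu)
  have "inj_on (circ_emb \<circ> \<psi>) (sphere 0 1)"
    using inj\<psi> inj_on_subset [OF inj_on_circ_emb order.trans [OF \<psi>V sub]] by (rule comp_inj_on)
  then have "circ_emb ` \<psi> ` sphere 0 1 = sphere 0 1"
    using circle_self_embedding_surj [OF cont _ im] by (simp add: image_comp)
  moreover have "circ_emb ` {0..<1} \<subseteq> sphere 0 1"
    by (auto simp: circ_emb_def)
  ultimately have "circ_emb ` {0..<1} \<subseteq> circ_emb ` \<psi> ` sphere 0 1"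
    by simp
  then have "{0..<1} \<subseteq> \<psi> ` sphere 0 1"
    using inj_on_image_subset_iff [OF inj_on_circ_emb] \<psi>V sub by blast
  then show ?thesis
    using \<psi>V sub by blast
qed

lemma dS1_nonneg: "0 \<le> dS1 x y"
  by (simp add: dS1_def)

lemma dS1_self [simp]: "dS1 x x = 0"
  by (simp add: dS1_def)

lemma dS1_less_1: "dS1 x y < 1"
  by (simp add: dS1_def frac_lt_1)

lemma dS1_frac_add: "t \<in> {0..<1} \<Longrightarrow> dS1 u (frac (u + t)) = t"
  using frac_add_simps(1) [of "u + t" "- u"] by (simp add: dS1_def)

lemma frac_add_dS1: "w \<in> {0..<1} \<Longrightarrow> frac (u + dS1 u w) = w"
  by (simp add: dS1_def)

lemma dS1_add: "dS1 u a \<le> dS1 u b \<Longrightarrow> dS1 u a + dS1 a b = dS1 u b"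
  using frac_diff_pos [of "a - u" "b - u"] by (simp add: dS1_def)

lemma continuous_map_frac_add: "continuous_map euclideanreal (S1top {0..<1}) (\<lambda>t. frac (u + t))"
  unfolding S1top_def
proof (rule continuous_map_pullback')
  have "circ_emb \<circ> (\<lambda>t. frac (u + t)) = (\<lambda>t. cis (2 * pi * (u + t)))"
    by (simp add: fun_eq_iff circ_emb_frac) (simp add: circ_emb_def)
  then show "continuous_map euclideanreal (top_of_set (sphere 0 1)) (circ_emb \<circ> (\<lambda>t. frac (u + t)))"
    by (auto simp: continuous_map_in_subtopology continuous_map_iff_continuous2 intro!: continuous_intros)
qed (auto simp: frac_lt_1)

lemma gamma_1_eq: "gamma E 1 u = Sup (insert 0 (dS1 u ` {w. (u, w) \<in> E}))"
proof -
  have "{(\<Sum>i<1. dS1 (us i) (us (Suc i))) | us. us 0 = u \<and> (\<forall>i<1. (us i, us (Suc i)) \<in> E)}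
      = dS1 u ` {w. (u, w) \<in> E}" (is "?A = ?B")
  proof (intro equalityI subsetI)
    fix x assume "x \<in> ?B"
    then obtain w where "(u, w) \<in> E" "x = dS1 u w" by blast
    then show "x \<in> ?A"
      by (intro CollectI exI [of _ "\<lambda>i. if i = 0 then u else w"]) auto
  qed auto
  then show ?thesis by (simp add: gamma_def)
qed

lemma bdd_above_dS1_edges: "bdd_above (insert 0 (dS1 u ` {w. (u, w) \<in> E}))"
  by (rule bdd_aboveI [of _ 1]) (auto simp: dS1_less_1 less_imp_le)

lemma gamma_1_nonneg: "0 \<le> gamma E 1 u"
  unfolding gamma_1_eq by (rule cSup_upper [OF _ bdd_above_dS1_edges]) simp

lemma less_gamma_1_imp_edge:
  assumes "0 \<le> t" "t < gamma E 1 u"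
  shows "\<exists>w. (u, w) \<in> E \<and> t < dS1 u w"
proof -
  have "t < Sup (insert 0 (dS1 u ` {w. (u, w) \<in> E}))"
    using assms(2) by (simp only: gamma_1_eq)
  then show ?thesis
    using assms(1) less_cSup_iff [OF insert_not_empty bdd_above_dS1_edges] by auto
qed

lemma dS1_f1_le_gamma_1: "dS1 u (f1 E u) \<le> gamma E 1 u"
proof -
  have "dS1 u (f1 E u) = frac (gamma E 1 u)"
    using frac_add_simps(1) [of "u + gamma E 1 u" "- u"] by (simp add: dS1_def f1_def)
  also have "\<dots> \<le> gamma E 1 u"
    using gamma_1_nonneg [of E u] by (simp add: frac_def)
  finally show ?thesis .
qed

lemma cyclic_graphD:
  assumes "cyclic_graph V E" "(u0, u1) \<in> E" "w \<in> V" "0 < dS1 u0 w" "dS1 u0 w < dS1 u0 u1"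
  shows "(u0, w) \<in> E" "(w, u1) \<in> E"
  using assms unfolding cyclic_graph_def by blast+

lemma cyclic_graph_edges_inside:
  assumes cyc: "cyclic_graph V E" and uw: "(u, w) \<in> E" and "a \<in> V" "b \<in> V"
    and ua: "0 < dS1 u a" and ab: "dS1 u a < dS1 u b" and bw: "dS1 u b < dS1 u w"
  shows "(u, a) \<in> E" "(a, b) \<in> E"
proof -
  have aw_dist: "dS1 u a < dS1 u w" using ab bw by linarith
  show "(u, a) \<in> E" using cyclic_graphD(1) [OF cyc uw \<open>a \<in> V\<close> ua aw_dist] .
  have aw: "(a, w) \<in> E" using cyclic_graphD(2) [OF cyc uw \<open>a \<in> V\<close> ua aw_dist] .
  have "dS1 u a + dS1 a b = dS1 u b" "dS1 u a + dS1 a w = dS1 u w"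
    using ab bw by (simp_all add: dS1_add)
  then have "0 < dS1 a b" "dS1 a b < dS1 a w" using ab bw by linarith+
  then show "(a, b) \<in> E" using cyclic_graphD [OF cyc aw \<open>b \<in> V\<close>] by blast
qed

lemma metric_for_dist_less:
  assumes cyc: "cyclic_graph V E" and met: "metric_for V E dV" and uw: "(u, w) \<in> E"
    and "u \<in> V" "a \<in> V" "b \<in> V" and ab: "dS1 u a < dS1 u b" and bw: "dS1 u b < dS1 u w"
  shows "dV u a < dV u b"
proof -
  have ms: "Metric_space V dV"
    and incr: "\<And>u0 u1 u2. (u0, u1) \<in> E \<Longrightarrow> (u1, u2) \<in> E \<Longrightarrow> dV u0 u1 < dV u0 u2"
    using met unfolding metric_for_def by auto
  have sub: "V \<subseteq> {0..<1}" using cyc by (simp add: cyclic_graph_def circ_digraph_def)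
  show ?thesis
  proof (cases "dS1 u a = 0")
    case True
    have "a \<in> {0..<1}" "u \<in> {0..<1}" using \<open>a \<in> V\<close> \<open>u \<in> V\<close> sub by auto
    then have "a = u" using frac_add_dS1 [of a u] True by simp
    moreover have "b \<noteq> u" using ab True by auto
    ultimately have "dV u a = 0" "dV u b \<noteq> 0"
      using Metric_space.zero [OF ms] \<open>u \<in> V\<close> \<open>b \<in> V\<close> by auto
    then show ?thesis using Metric_space.nonneg [OF ms, of u b] by linarith
  next
    case False
    then have "0 < dS1 u a" using dS1_nonneg [of u a] by linarith
    then show ?thesis
      using cyclic_graph_edges_inside [OF cyc uw \<open>a \<in> V\<close> \<open>b \<in> V\<close> _ ab bw] incr by blast
  qed
qed

lemma continuous_map_dist_S1top:
  assumes "metric_for V E dV" "u \<in> V"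
  shows "continuous_map (S1top V) euclideanreal (dV u)"
proof -
  have "Metric_space V dV" "Metric_space.mtopology V dV = S1top V"
    using assms(1) by (auto simp: metric_for_def)
  then show ?thesis
    using continuous_on_mdist [of u "metric (V, dV)"] assms(2)
    by (simp add: Metric_space.mtopology_of Metric_space.mdist_metric Metric_space.mspace_metric)
qed

lemma strict_mono_on_atLeastAtMost_if_atLeastLessThan:
  fixes f :: "real \<Rightarrow> real"
  assumes cont: "continuous_on {a..b} f" and mono: "strict_mono_on {a..<b} f"
  shows "strict_mono_on {a..b} f"
proof (rule strict_mono_onI)
  fix s t assume s: "s \<in> {a..b}" and t: "t \<in> {a..b}" and "s < t"
  show "f s < f t"
  proof (cases "t < b")
    case True
    then show ?thesis using mono s t \<open>s < t\<close> by (auto intro: strict_mono_onD)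
  next
    case False
    define m where "m = (s + b) / 2"
    have m: "s < m" "m < b" using \<open>s < t\<close> t False by (auto simp: m_def)
    have "f m \<le> f b"
    proof (rule continuous_ge_on_closure [where S = "{m<..<b}" and f = f and x = b])
      show "continuous_on (closure {m<..<b}) f"
        using cont m s by (auto intro: continuous_on_subset)
      show "b \<in> closure {m<..<b}" using m by simp
    qed (use m s in \<open>auto intro!: less_imp_le [OF strict_mono_onD [OF mono]]\<close>)
    moreover have "f s < f m" using mono m s by (auto intro: strict_mono_onD)
    ultimately show ?thesis using False t by auto
  qed
qed

lemma continuous_mono_on_image_atLeastAtMost:
  fixes f :: "real \<Rightarrow> real"
  assumes "a \<le> b" "continuous_on {a..b} f" "mono_on {a..b} f"
  shows "f ` {a..b} = {f a..f b}"
proof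
  show "f ` {a..b} \<subseteq> {f a..f b}"
    using assms(1,3) by (auto simp: mono_on_def)
  show "{f a..f b} \<subseteq> f ` {a..b}"
    using IVT' [of f a _ b] assms(1,2) by force
qed

lemma continuous_on_dist_frac_add:
  assumes "metric_for {0..<1} E dV" "u \<in> {0..<1}"
  shows "continuous_on A (\<lambda>t. dV u (frac (u + t)))"
proof -
  have "continuous_map euclideanreal euclideanreal (dV u \<circ> (\<lambda>t. frac (u + t)))"
    using continuous_map_frac_add continuous_map_dist_S1top [OF assms] by (rule continuous_map_compose)
  then show ?thesis
    by (auto simp: continuous_map_iff_continuous2 o_def intro: continuous_on_subset)
qed

lemma strict_mono_on_dist_along_arc:
  assumes cyc: "cyclic_graph {0..<1} E" and met: "metric_for {0..<1} E dV" and u: "u \<in> {0..<1}"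
  shows "strict_mono_on {0..dS1 u (f1 E u)} (\<lambda>t. dV u (frac (u + t)))"
proof (rule strict_mono_on_atLeastAtMost_if_atLeastLessThan)
  show "continuous_on {0..dS1 u (f1 E u)} (\<lambda>t. dV u (frac (u + t)))"
    using met u by (rule continuous_on_dist_frac_add)
  show "strict_mono_on {0..<dS1 u (f1 E u)} (\<lambda>t. dV u (frac (u + t)))"
  proof (rule strict_mono_onI)
    fix s t assume s: "s \<in> {0..<dS1 u (f1 E u)}" and t: "t \<in> {0..<dS1 u (f1 E u)}" and "s < t"
    then have "t < gamma E 1 u" using dS1_f1_le_gamma_1 [of u E] by simp
    then obtain w where uw: "(u, w) \<in> E" and "t < dS1 u w"
      using less_gamma_1_imp_edge t by fastforce
    moreover have "s \<in> {0..<1}" "t \<in> {0..<1}"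
      using s t dS1_less_1 [of u "f1 E u"] by auto
    ultimately show "dV u (frac (u + s)) < dV u (frac (u + t))"
      using metric_for_dist_less [OF cyc met uw u] \<open>s < t\<close>
      by (simp add: dS1_frac_add frac_lt_1)
  qed
qed

lemma g_eq_frac_add:
  assumes inj: "inj_on (\<lambda>t. dV u (frac (u + t))) {0..dS1 u (f1 E u)}"
    and t: "t \<in> {0..dS1 u (f1 E u)}"
  shows "g {0..<1} E dV (dV u (frac (u + t))) u = frac (u + t)"
  unfolding g_def
proof (rule the_equality)
  have "t \<in> {0..<1}" using t dS1_less_1 [of u "f1 E u"] by auto
  then show "frac (u + t) \<in> arc {0..<1} u (f1 E u) \<and> dV u (frac (u + t)) = dV u (frac (u + t))"
    using t by (simp add: arc_def dS1_frac_add frac_lt_1)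
next
  fix w assume w: "w \<in> arc {0..<1} u (f1 E u) \<and> dV u w = dV u (frac (u + t))"
  then have w01: "w \<in> {0..<1}" and "dS1 u w \<in> {0..dS1 u (f1 E u)}"
    by (auto simp: arc_def dS1_nonneg)
  moreover have "dV u (frac (u + dS1 u w)) = dV u (frac (u + t))"
    using w w01 by (simp add: frac_add_dS1)
  ultimately have "dS1 u w = t" using inj t by (auto dest: inj_onD)
  then show "w = frac (u + t)" using frac_add_dS1 [of w u] w01 by simp
qed

lemma image_dist_along_arc:
  assumes cyc: "cyclic_graph {0..<1} E" and met: "metric_for {0..<1} E dV" and u: "u \<in> {0..<1}"
  shows "(\<lambda>t. dV u (frac (u + t))) ` {0..dS1 u (f1 E u)} = {0..gammaV E dV u}"
proof -
  have "Metric_space {0..<1} dV" using met by (simp add: metric_for_def)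
  then have "dV u (frac (u + 0)) = 0" using u by (simp add: Metric_space.zero)
  moreover have "dV u (frac (u + dS1 u (f1 E u))) = gammaV E dV u"
    by (simp add: gammaV_def f1_def frac_add_dS1 frac_lt_1)
  ultimately show ?thesis
    using continuous_mono_on_image_atLeastAtMost [OF dS1_nonneg continuous_on_dist_frac_add [OF met u]
        strict_mono_on_imp_mono_on [OF strict_mono_on_dist_along_arc [OF cyc met u]]]
    by simp
qed

theorem lemma4p5:
  fixes V :: "real set" and E :: "(real \<times> real) set" and dV :: "real \<Rightarrow> real \<Rightarrow> real"
    and u :: real
  assumes "cyclic_graph V E"
    and "closed_graph V"
    and "continuous_graph V E"
    and "metric_for V E dV"
    and "S1top V homeomorphic_space top_of_set (sphere (0::complex) 1)"
    and "u \<in> V"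
  shows "continuous_map (top_of_set {0..gammaV E dV u}) (S1top V) (\<lambda>r. g V E dV r u)"
proof -
  have V: "V = {0..<1}"
    using assms(1,5)
    by (intro S1top_homeomorphic_circle_imp_eq) (auto simp: cyclic_graph_def circ_digraph_def)
  have cyc: "cyclic_graph {0..<1} E" and met: "metric_for {0..<1} E dV" and u: "u \<in> {0..<1}"
    using assms(1,4,6) by (simp_all add: V)
  define c where "c = dS1 u (f1 E u)"
  define h where "h t = dV u (frac (u + t))" for t
  have inj: "inj_on h {0..c}"
    unfolding c_def h_def using strict_mono_on_dist_along_arc [OF cyc met u]
    by (rule strict_mono_on_imp_inj_on)
  have img: "h ` {0..c} = {0..gammaV E dV u}"
    unfolding c_def h_def using cyc met u by (rule image_dist_along_arc)
  have "continuous_on {0..gammaV E dV u} (inv_into {0..c} h)"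
    unfolding img [symmetric] h_def using continuous_on_dist_frac_add [OF met u] compact_Icc
    by (rule continuous_on_inv) (simp add: inv_into_f_f [OF inj [unfolded h_def]])
  then have cont: "continuous_map (top_of_set {0..gammaV E dV u}) (S1top V)
      ((\<lambda>t. frac (u + t)) \<circ> inv_into {0..c} h)"
    unfolding V by (intro continuous_map_compose [OF _ continuous_map_frac_add])
      (simp add: continuous_map_iff_continuous)
  have "g V E dV (h t) u = frac (u + t)" if "t \<in> {0..c}" for t
    using g_eq_frac_add [of dV u E t] inj that unfolding V h_def c_def by simp
  then have g_eq: "g V E dV r u = frac (u + inv_into {0..c} h r)"
    if "r \<in> {0..gammaV E dV u}" for r
    using inv_into_into f_inv_into_f that unfolding img [symmetric] by metis
  show ?thesis
    using cont by (rule continuous_map_eq) (simp add: g_eq)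
qed

end
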